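(* Let $(\bm{A}_p,\mathcal{R}_p)$ be a Partial Double Description (PDD) of a polyhedral cone $\mathcal{P}\subseteq\mathbb{R}^d$ (in homogenized coordinates), and let $\bm{A}_q$ be the (exact) constraint matrix of a polyhedral cone $\mathcal{Q}=\{\bm{x}\in\mathbb{R}^d \mid \bm{A}_q\bm{x}\ge 0\}$. Let $(\bm{A}',\mathcal{R}'_p)$ be the output of the Batch Intersection procedure applied to $(\bm{A}_p,\mathcal{R}_p)$ and $\bm{A}_q$. Then $$\{\bm{x}\in\mathbb{R}^d \mid \bm{A}'\bm{x}\ge 0\}=\{\bm{x}\in\mathbb{R}^d \mid \bm{A}_p\bm{x}\ge 0 \wedge \bm{A}_q\bm{x}\ge 0\},$$ and $$\Big\{\sum_{\bm{r}_i\in\mathcal{R}'_p}\lambda_i\bm{r}_i \;\Big|\; \sum_i\lambda_i\le 1,\ \lambda_i\in\mathbb{R}^+_0\Big\}\subseteq\{\bm{x}\in\mathbb{R}^d \mid \bm{A}_p\bm{x}\ge 0 \wedge \bm{A}_q\bm{x}\ge 0\}.$$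
   Context: A polyhedral cone is described either by constraints ($\mathcal{H}$-representation) $\{\bm{x}\mid \bm{A}\bm{x}\ge 0\}$ (rows of $\bm{A}$ are constraints $\bm{a}$) or by a finite set of generating rays ($\mathcal{V}$-representation). A Partial Double Description (PDD) of a cone is a pair $(\bm{A},\mathcal{R})$ of a constraint matrix $\bm{A}$ and a finite set of rays $\mathcal{R}$ such that $\bm{a}\bm{r}\ge 0$ for every row $\bm{a}$ of $\bm{A}$ and every $\bm{r}\in\mathcal{R}$ (i.e., the rays under-approximate the cone defined by $\bm{A}$). A constraint $\bm{a}_j$ is active for a ray $\bm{r}_i$ if $\bm{a}_j\bm{r}_i=0$; the incidence matrix is $\mathcal{I}_{i,j}=1$ if $\bm{a}_j\bm{r}_i=0$ and $0$ otherwise, with $\mathcal{I}_i\subseteq\mathcal{I}_j$ iff $\mathcal{I}_{i,k}\le\mathcal{I}_{j,k}$ for all $k$. A PDD is A-irredundant if $\mathcal{I}_i\not\subseteq\mathcal{I}_j$ for all $i\ne j$; it is made A-irredundant by removing rays whose set of active constraints is a subset of (or equal to) that of another remaining ray until this holds. Batch Intersection, input a PDD $(\bm{A}_p,\mathcal{R}_p)$ and a constraint matrix $\bm{A}_q$: partition $\mathcal{R}_p$ into $\mathcal{R}_-=\{\bm{r}\mid \min(\bm{A}_q\bm{r})<0\}$, $\mathcal{R}_+=\{\bm{r}\mid \min(\bm{A}_q\bm{r})>0\}$ and $\mathcal{R}_0$ (the rest). For every pair $(\bm{r}_+,\bm{r}_-)\in\mathcal{R}_+\times\mathcal{R}_-$,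 compute by ray-shooting the point $\bm{r}_*$ on the segment from $\bm{r}_+$ to $\bm{r}_-$ where it first (as seen from $\bm{r}_+$) meets a hyperplane $\{\bm{x}\mid\tilde{\bm{a}}\bm{x}=0\}$ with $\tilde{\bm{a}}$ a row of $\bm{A}_q$; collect these in $\mathcal{R}_*$. Form the PDD $(\bm{A}_p\cup\bm{A}_q,\ \mathcal{R}_0\cup\mathcal{R}_+\cup\mathcal{R}_* )$, make it A-irredundant, and return it as $(\bm{A}',\mathcal{R}'_p)$. *)

theory Defs
  imports "HOL-Analysis.Analysis"
begin

text \<open>Constraint matrices are represented by the finite set of their rows,
  rays by a finite set of vectors in real^'d.\<close>

definition cone_H :: "(real^'d) set \<Rightarrow> (real^'d) set" where
  "cone_H A = {x. \<forall>a\<in>A. a \<bullet> x \<ge> 0}"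

definition is_PDD :: "(real^'d) set \<Rightarrow> (real^'d) set \<Rightarrow> bool" where
  "is_PDD A R \<longleftrightarrow> finite A \<and> finite R \<and> (\<forall>a\<in>A. \<forall>r\<in>R. a \<bullet> r \<ge> 0)"

text \<open>Set of active constraints (row of the incidence matrix) of a ray.\<close>
definition active :: "(real^'d) set \<Rightarrow> real^'d \<Rightarrow> (real^'d) set" where
  "active A r = {a\<in>A. a \<bullet> r = 0}"

definition A_irredundant :: "(real^'d) set \<Rightarrow> (real^'d) set \<Rightarrow> bool" where
  "A_irredundant A R \<longleftrightarrow> (\<forall>ri\<in>R. \<forall>rj\<in>R. ri \<noteq> rj \<longrightarrow> \<not> active A ri \<subseteq> active A rj)"

definition irred_step :: "(real^'d) set \<Rightarrow> (real^'d) set \<Rightarrow> (real^'d) set \<Rightarrow> bool" where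
  "irred_step A R S \<longleftrightarrow> (\<exists>r\<in>R. S = R - {r} \<and> (\<exists>r'\<in>R - {r}. active A r \<subseteq> active A r'))"

definition make_A_irredundant :: "(real^'d) set \<Rightarrow> (real^'d) set \<Rightarrow> (real^'d) set \<Rightarrow> bool" where
  "make_A_irredundant A R R' \<longleftrightarrow> (irred_step A)\<^sup>*\<^sup>* R R' \<and> A_irredundant A R'"

definition R_minus :: "(real^'d) set \<Rightarrow> (real^'d) set \<Rightarrow> (real^'d) set" where
  "R_minus Aq R = {r\<in>R. \<exists>a\<in>Aq. a \<bullet> r < 0}"

definition R_plus :: "(real^'d) set \<Rightarrow> (real^'d) set \<Rightarrow> (real^'d) set" where
  "R_plus Aq R = {r\<in>R. \<forall>a\<in>Aq. a \<bullet> r > 0}"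

definition R_zero :: "(real^'d) set \<Rightarrow> (real^'d) set \<Rightarrow> (real^'d) set" where
  "R_zero Aq R = R - R_minus Aq R - R_plus Aq R"

definition shoot_param :: "(real^'d) set \<Rightarrow> real^'d \<Rightarrow> real^'d \<Rightarrow> real" where
  "shoot_param Aq rp rm =
     Min {t. 0 \<le> t \<and> t \<le> 1 \<and> (\<exists>a\<in>Aq. a \<bullet> (rp + t *\<^sub>R (rm - rp)) = 0)}"

definition ray_shoot :: "(real^'d) set \<Rightarrow> real^'d \<Rightarrow> real^'d \<Rightarrow> real^'d" where
  "ray_shoot Aq rp rm = rp + shoot_param Aq rp rm *\<^sub>R (rm - rp)"

definition R_star :: "(real^'d) set \<Rightarrow> (real^'d) set \<Rightarrow> (real^'d) set" where
  "R_star Aq R = {ray_shoot Aq rp rm | rp rm. rp \<in> R_plus Aq R \<and> rm \<in> R_minus Aq R}"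

definition batch_intersection ::
  "(real^'d) set \<Rightarrow> (real^'d) set \<Rightarrow> (real^'d) set \<Rightarrow> (real^'d) set \<Rightarrow> (real^'d) set \<Rightarrow> bool" where
  "batch_intersection Ap Rp Aq A' R' \<longleftrightarrow>
     A' = Ap \<union> Aq \<and>
     make_A_irredundant A' (R_zero Aq Rp \<union> R_plus Aq Rp \<union> R_star Aq Rp) R'"

end

theory Submission
  imports Defs
begin

text \<open>Every candidate ray of Batch Intersection lies in the intersection cone: rays of
  \<open>R\<^sub>0 \<union> R\<^sub>+\<close> satisfy \<open>A\<^sub>q\<close> by the sign partition, and a shot ray \<open>r\<^sub>*\<close> satisfies \<open>A\<^sub>p\<close>
  by convexity of the segment from \<open>r\<^sub>+\<close> to \<open>r\<^sub>-\<close>, and \<open>A\<^sub>q\<close> because along the segment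
  every row of \<open>A\<^sub>q\<close> starts positive and can only become negative after crossing zero,
  which happens no earlier than the first hit \<open>r\<^sub>*\<close>. Making the PDD A-irredundant only
  deletes rays, and nonnegative combinations stay in a cone of the form \<open>Ax \<ge> 0\<close>.\<close>

lemma cone_H_Un: "cone_H (A \<union> B) = cone_H A \<inter> cone_H B"
  by (auto simp: cone_H_def)

lemma convex_cone_H: "convex (cone_H A)"
proof -
  have "cone_H A = (\<Inter>a\<in>A. {x. a \<bullet> x \<ge> 0})"
    by (auto simp: cone_H_def)
  then show ?thesis
    by (simp add: convex_INT convex_halfspace_ge)
qed

lemma sum_scaleR_in_cone_H:
  assumes "R \<subseteq> cone_H A" "\<And>r. r \<in> R \<Longrightarrow> l r \<ge> 0"
  shows "(\<Sum>r\<in>R. l r *\<^sub>R r) \<in> cone_H A"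
  unfolding cone_H_def
proof (intro CollectI ballI)
  fix a assume "a \<in> A"
  then have "0 \<le> (\<Sum>r\<in>R. l r * (a \<bullet> r))"
    using assms by (intro sum_nonneg) (auto simp: cone_H_def)
  then show "0 \<le> a \<bullet> (\<Sum>r\<in>R. l r *\<^sub>R r)"
    by (simp add: inner_sum_right)
qed

lemma segment_point_in_cone_H:
  assumes "rp \<in> cone_H A" "rm \<in> cone_H A" "0 \<le> t" "t \<le> 1"
  shows "rp + t *\<^sub>R (rm - rp) \<in> cone_H A"
proof -
  have "rp + t *\<^sub>R (rm - rp) = (1 - t) *\<^sub>R rp + t *\<^sub>R rm"
    by (simp add: algebra_simps)
  then show ?thesis
    using convexD_alt[OF convex_cone_H assms] by simp
qed

lemma make_A_irredundant_subset: "make_A_irredundant A R R' \<Longrightarrow> R' \<subseteq> R"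
proof -
  have "(irred_step A)\<^sup>*\<^sup>* R R' \<Longrightarrow> R' \<subseteq> R"
    by (induction rule: rtranclp_induct) (auto simp: irred_step_def)
  then show "make_A_irredundant A R R' \<Longrightarrow> R' \<subseteq> R"
    by (simp add: make_A_irredundant_def)
qed

lemma is_PDD_rays_in_cone_H: "is_PDD A R \<Longrightarrow> R \<subseteq> cone_H A"
  by (auto simp: is_PDD_def cone_H_def)

lemma Diff_R_minus_subset_cone_H: "R - R_minus Aq R \<subseteq> cone_H Aq"
  by (fastforce simp: R_minus_def cone_H_def not_le)

definition hit_params :: "(real^'d) set \<Rightarrow> real^'d \<Rightarrow> real^'d \<Rightarrow> real set" where
  "hit_params Aq rp rm = {t. 0 \<le> t \<and> t \<le> 1 \<and> (\<exists>a\<in>Aq. a \<bullet> (rp + t *\<^sub>R (rm - rp)) = 0)}"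

lemma inner_segment_point:
  fixes a rp rm :: "'a::real_inner"
  shows "a \<bullet> (rp + t *\<^sub>R (rm - rp)) = a \<bullet> rp + t * (a \<bullet> rm - a \<bullet> rp)"
  by (simp add: inner_add_right inner_diff_right algebra_simps)

lemma affine_root_below:
  fixes p c t :: real
  assumes "0 < p" "p + t * c < 0" "0 \<le> t"
  shows "\<exists>s. 0 \<le> s \<and> s < t \<and> p + s * c = 0"
proof -
  have "c < 0"
    using assms by (smt (verit) mult_nonneg_nonneg)
  then show ?thesis
    using assms by (intro exI[of _ "p / - c"]) (auto simp: field_simps)
qed

lemma finite_hit_params:
  assumes "finite Aq" "\<And>a. a \<in> Aq \<Longrightarrow> a \<bullet> rp \<noteq> 0"
  shows "finite (hit_params Aq rp rm)"
proof -
  have "hit_params Aq rp rm \<subseteq> (\<lambda>a. (a \<bullet> rp) / (a \<bullet> rp - a \<bullet> rm)) ` Aq"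
  proof
    fix t assume "t \<in> hit_params Aq rp rm"
    then obtain a where "a \<in> Aq" and root: "a \<bullet> rp + t * (a \<bullet> rm - a \<bullet> rp) = 0"
      by (auto simp: hit_params_def inner_segment_point)
    moreover have "a \<bullet> rp - a \<bullet> rm \<noteq> 0"
      using root assms(2)[OF \<open>a \<in> Aq\<close>] by auto
    ultimately show "t \<in> (\<lambda>a. (a \<bullet> rp) / (a \<bullet> rp - a \<bullet> rm)) ` Aq"
      by (auto simp: field_simps intro!: image_eqI[of _ _ a])
  qed
  then show ?thesis
    using assms(1) finite_subset by blast
qed

lemma hit_params_nonempty:
  assumes "a \<in> Aq" "a \<bullet> rp > 0" "a \<bullet> rm < 0"
  shows "hit_params Aq rp rm \<noteq> {}"
proof -
  obtain s where "0 \<le> s" "s < 1" "a \<bullet> rp + s * (a \<bullet> rm - a \<bullet> rp) = 0"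
    using affine_root_below[of "a \<bullet> rp" 1 "a \<bullet> rm - a \<bullet> rp"] assms by auto
  then have "s \<in> hit_params Aq rp rm"
    using assms(1) by (auto simp: hit_params_def inner_segment_point)
  then show ?thesis
    by auto
qed

lemma ray_shoot_in_cone_H:
  assumes "finite Aq" "\<And>a. a \<in> Aq \<Longrightarrow> a \<bullet> rp > 0"
    and "am \<in> Aq" "am \<bullet> rm < 0"
  shows "0 \<le> shoot_param Aq rp rm" "shoot_param Aq rp rm \<le> 1"
    and "ray_shoot Aq rp rm \<in> cone_H Aq"
proof -
  let ?H = "hit_params Aq rp rm" and ?t = "shoot_param Aq rp rm"
  have fin: "finite ?H"
    using finite_hit_params assms(1,2) by (metis less_irrefl)
  have t_eq: "?t = Min ?H"
    by (simp add: shoot_param_def hit_params_def)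
  have "?H \<noteq> {}"
    using hit_params_nonempty assms(2-4) by blast
  then have "?t \<in> ?H"
    using fin t_eq by simp
  then show t0: "0 \<le> ?t" and "?t \<le> 1"
    by (auto simp: hit_params_def)
  have "a \<bullet> ray_shoot Aq rp rm \<ge> 0" if a: "a \<in> Aq" for a
  proof (rule ccontr)
    assume "\<not> ?thesis"
    then have "a \<bullet> rp + ?t * (a \<bullet> rm - a \<bullet> rp) < 0"
      by (simp add: ray_shoot_def inner_segment_point)
    then obtain s where s: "0 \<le> s" "s < ?t" "a \<bullet> rp + s * (a \<bullet> rm - a \<bullet> rp) = 0"
      using affine_root_below assms(2)[OF a] t0 by blast
    then have "s \<in> ?H"
      using a \<open>?t \<le> 1\<close> by (auto simp: hit_params_def inner_segment_point)
    then show False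
      using s(2) fin t_eq Min_le leD by metis
  qed
  then show "ray_shoot Aq rp rm \<in> cone_H Aq"
    by (simp add: cone_H_def)
qed

lemma R_star_subset_cone_H:
  assumes "is_PDD Ap Rp" "finite Aq"
  shows "R_star Aq Rp \<subseteq> cone_H (Ap \<union> Aq)"
proof
  fix r assume "r \<in> R_star Aq Rp"
  then obtain rp rm am where r: "r = ray_shoot Aq rp rm"
    and rp: "rp \<in> Rp" "\<And>a. a \<in> Aq \<Longrightarrow> a \<bullet> rp > 0"
    and rm: "rm \<in> Rp" and am: "am \<in> Aq" "am \<bullet> rm < 0"
    by (auto simp: R_star_def R_plus_def R_minus_def)
  note shoot = ray_shoot_in_cone_H[OF assms(2) rp(2) am]
  have "rp \<in> cone_H Ap" "rm \<in> cone_H Ap"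
    using is_PDD_rays_in_cone_H[OF assms(1)] rp(1) rm by auto
  then have "r \<in> cone_H Ap"
    unfolding r ray_shoot_def using segment_point_in_cone_H shoot(1,2) by blast
  then show "r \<in> cone_H (Ap \<union> Aq)"
    using shoot(3) r by (simp add: cone_H_Un)
qed

lemma batch_intersection_rays_subset_cone_H:
  assumes "is_PDD Ap Rp" "finite Aq" "batch_intersection Ap Rp Aq A' R'"
  shows "R' \<subseteq> cone_H A'"
proof -
  have A': "A' = Ap \<union> Aq"
    and "R' \<subseteq> R_zero Aq Rp \<union> R_plus Aq Rp \<union> R_star Aq Rp"
    using assms(3) make_A_irredundant_subset by (auto simp: batch_intersection_def)
  moreover have "R_zero Aq Rp \<union> R_plus Aq Rp = Rp - R_minus Aq Rp"
    by (auto simp: R_zero_def R_plus_def R_minus_def)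
  moreover have "Rp - R_minus Aq Rp \<subseteq> cone_H (Ap \<union> Aq)"
    using is_PDD_rays_in_cone_H[OF assms(1)] Diff_R_minus_subset_cone_H
    by (auto simp: cone_H_Un)
  ultimately show ?thesis
    using R_star_subset_cone_H[OF assms(1,2)] by blast
qed

theorem lemma4p1:
  fixes Ap Rp Aq A' R' :: "(real^'d) set"
  assumes "is_PDD Ap Rp"
    and "finite Aq"
    and "batch_intersection Ap Rp Aq A' R'"
  shows "cone_H A' = cone_H Ap \<inter> cone_H Aq \<and>
      {\<Sum>r\<in>R'. l r *\<^sub>R r | l. (\<forall>r\<in>R'. (l r :: real) \<ge> 0) \<and> (\<Sum>r\<in>R'. l r) \<le> 1}
           \<subseteq> cone_H Ap \<inter> cone_H Aq"
proof -
  have cone: "cone_H A' = cone_H Ap \<inter> cone_H Aq"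
    using assms(3) by (simp add: batch_intersection_def cone_H_Un)
  have "R' \<subseteq> cone_H A'"
    using batch_intersection_rays_subset_cone_H[OF assms] .
  then have "{\<Sum>r\<in>R'. l r *\<^sub>R r | l. (\<forall>r\<in>R'. (l r :: real) \<ge> 0) \<and> (\<Sum>r\<in>R'. l r) \<le> 1}
      \<subseteq> cone_H A'"
    using sum_scaleR_in_cone_H by blast
  with cone show ?thesis
    by simp
qed

end
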